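(* Assume in addition that $p_j\ge -w_j$ for every $j\in J$. Let $S^*$ be an optimal solution of the Target Associated $k$-Set problem and let $\hat S$ be the set of genes returned by the Greedy algorithm. Then $W(\hat S)\ge W(S^* )/k$.
   Context: Let $J$ be a finite set of samples and $G$ a finite set of genes; for each $g\in G$ a set $A_g\subseteq J$ is given. Each $j\in J$ has a weight $w_j\in\mathbb{R}$ and penalty $p_j>0$, and $k$ is a positive integer. For $S\subseteq G$ and $j\in J$, let $c_S(j)=|\{g\in S: j\in A_g\}|$, $U(S)=\bigcup_{g\in S}A_g$, and $$W(S)=\sum_{j\in U(S)} w_j-\sum_{j\in U(S)}(c_S(j)-1)\,p_j .$$ The Target Associated $k$-Set problem asks for $S\subseteq G$ with $|S|\le k$ maximizing $W(S)$ (all $W$ values are computed with the original weights $w_j$). The Greedy algorithm: maintain current weights $\tilde w_j$, initialized to $\tilde w_j=w_j$, and a current solution $\hat S=\emptyset$. For $\ell=1,\dots,k$: compute $\tilde W(A_g)=\sum_{j\in A_g}\tilde w_j$ for every $g\in G\setminus \hat S$; if no $g$ has $\tilde W(A_g)>0$, stop; otherwise pick $g$ maximizing $\tilde W(A_g)$, add $g$ to $\hat S$, and set $\tilde w_j\leftarrow -p_j$ for all $j\in A_g$. The output is $\hat S$. (The paper's choice of penalties — $p_j$ equal to the average of the positive normalized weights when $w_j>0$, and $p_j=|w_j|$ when $w_j<0$ — satisfies $p_j\ge -w_j$.) *)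

theory Defs
  imports Complex_Main
begin

text \<open>Target Associated k-Set problem. Genes of type 'g, samples of type 'j.
  A g is the set of samples associated with gene g.\<close>

definition cov :: "('g \<Rightarrow> 'j set) \<Rightarrow> 'g set \<Rightarrow> 'j \<Rightarrow> nat" where
  "cov A S j = card {g \<in> S. j \<in> A g}"

definition Uset :: "('g \<Rightarrow> 'j set) \<Rightarrow> 'g set \<Rightarrow> 'j set" where
  "Uset A S = (\<Union>g\<in>S. A g)"

definition Wval :: "('g \<Rightarrow> 'j set) \<Rightarrow> ('j \<Rightarrow> real) \<Rightarrow> ('j \<Rightarrow> real) \<Rightarrow> 'g set \<Rightarrow> real" where
  "Wval A w p S = (\<Sum>j\<in>Uset A S. w j) - (\<Sum>j\<in>Uset A S. (real (cov A S j) - 1) * p j)"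

definition optimal_kset ::
  "'g set \<Rightarrow> ('g \<Rightarrow> 'j set) \<Rightarrow> ('j \<Rightarrow> real) \<Rightarrow> ('j \<Rightarrow> real) \<Rightarrow> nat \<Rightarrow> 'g set \<Rightarrow> bool" where
  "optimal_kset G A w p k S \<longleftrightarrow> S \<subseteq> G \<and> card S \<le> k \<and>
     (\<forall>T. T \<subseteq> G \<and> card T \<le> k \<longrightarrow> Wval A w p T \<le> Wval A w p S)"

text \<open>States reachable by the Greedy algorithm: (current weights, current solution,
  number of iterations performed). Ties in the choice of the maximiser are broken arbitrarily.\<close>

inductive greedy_reach ::
  "'g set \<Rightarrow> ('g \<Rightarrow> 'j set) \<Rightarrow> ('j \<Rightarrow> real) \<Rightarrow> ('j \<Rightarrow> real) \<Rightarrow> nat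
   \<Rightarrow> ('j \<Rightarrow> real) \<Rightarrow> 'g set \<Rightarrow> nat \<Rightarrow> bool"
  for G A w p k where
  init: "greedy_reach G A w p k w {} 0"
| step: "\<lbrakk> greedy_reach G A w p k wt S l; l < k; g \<in> G - S;
           (\<Sum>j\<in>A g. wt j) > 0;
           \<forall>h\<in>G - S. (\<Sum>j\<in>A h. wt j) \<le> (\<Sum>j\<in>A g. wt j) \<rbrakk>
         \<Longrightarrow> greedy_reach G A w p k (\<lambda>j. if j \<in> A g then - p j else wt j) (insert g S) (Suc l)"

definition greedy_output ::
  "'g set \<Rightarrow> ('g \<Rightarrow> 'j set) \<Rightarrow> ('j \<Rightarrow> real) \<Rightarrow> ('j \<Rightarrow> real) \<Rightarrow> nat \<Rightarrow> 'g set \<Rightarrow> bool" where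
  "greedy_output G A w p k S \<longleftrightarrow> (\<exists>wt l. greedy_reach G A w p k wt S l \<and>
      (l = k \<or> \<not> (\<exists>g\<in>G - S. (\<Sum>j\<in>A g. wt j) > 0)))"

end

theory Submission
  imports Defs
begin

text \<open>Because p j \<ge> - w j, each extra cover of a sample costs at least as much as the sample is
  worth, so W S \<le> (\<Sum>g\<in>S. W {g}) and hence W S* \<le> k * max W {g}. The current weights of
  Greedy are exactly the marginal gains of adding a gene, so W increases at every step and the
  first step already attains max W {g}; if Greedy stops at once, every W {g}, and therefore
  W S*, is non-positive.\<close>

lemma cov_eq_0_iff: "finite S \<Longrightarrow> cov A S j = 0 \<longleftrightarrow> j \<notin> Uset A S"
  unfolding cov_def Uset_def by auto

lemma cov_insert:
  "finite S \<Longrightarrow> g \<notin> S \<Longrightarrow> cov A (insert g S) j = cov A S j + (if j \<in> A g then 1 else 0)"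
proof -
  assume "finite S" "g \<notin> S"
  moreover have "{h \<in> insert g S. j \<in> A h} =
      (if j \<in> A g then insert g {h \<in> S. j \<in> A h} else {h \<in> S. j \<in> A h})"
    by auto
  ultimately show ?thesis by (simp add: cov_def)
qed

lemma Wval_empty [simp]: "Wval A w p {} = 0"
  by (simp add: Wval_def Uset_def)

lemma Wval_singleton: "Wval A w p {g} = sum w (A g)"
proof -
  have "{h \<in> {g}. j \<in> A h} = {g}" if "j \<in> A g" for j
    using that by auto
  then have "cov A {g} j = 1" if "j \<in> A g" for j
    using that by (simp add: cov_def)
  then show ?thesis by (simp add: Wval_def Uset_def)
qed

definition Wcontrib :: "('g \<Rightarrow> 'j set) \<Rightarrow> ('j \<Rightarrow> real) \<Rightarrow> ('j \<Rightarrow> real) \<Rightarrow> 'g set \<Rightarrow> 'j \<Rightarrow> real" where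
  "Wcontrib A w p S j = (if j \<in> Uset A S then w j - (real (cov A S j) - 1) * p j else 0)"

lemma Wval_eq_sum_Wcontrib:
  assumes "finite J" and "Uset A S \<subseteq> J"
  shows "Wval A w p S = (\<Sum>j\<in>J. Wcontrib A w p S j)"
proof -
  have "(\<Sum>j\<in>J. Wcontrib A w p S j) = (\<Sum>j\<in>Uset A S. w j - (real (cov A S j) - 1) * p j)"
    using sum.inter_restrict[OF assms(1), symmetric] assms(2)
    by (simp add: Wcontrib_def sum.If_cases Int_absorb1 Int_commute assms(1))
  then show ?thesis by (simp add: Wval_def sum_subtractf)
qed

lemma Wval_insert:
  assumes "finite J" "\<forall>g\<in>G. A g \<subseteq> J" "S \<subseteq> G" "finite S" "g \<in> G" "g \<notin> S"
  shows "Wval A w p (insert g S) =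
    Wval A w p S + (\<Sum>j\<in>A g. if j \<in> Uset A S then - p j else w j)"
proof -
  have sub: "Uset A T \<subseteq> J" if "T \<subseteq> G" for T
    using that assms(2) by (auto simp: Uset_def)
  have "Wcontrib A w p (insert g S) j - Wcontrib A w p S j
      = (if j \<in> A g then (if j \<in> Uset A S then - p j else w j) else 0)" for j
    using cov_insert[OF assms(4,6), of A j] cov_eq_0_iff[OF assms(4), of A j]
    by (auto simp: Wcontrib_def Uset_def algebra_simps)
  then have "Wval A w p (insert g S) - Wval A w p S
      = (\<Sum>j\<in>J. if j \<in> A g then (if j \<in> Uset A S then - p j else w j) else 0)"
    using assms(3,5)
    by (simp add: Wval_eq_sum_Wcontrib[OF assms(1) sub] sum_subtractf[symmetric])
  also have "\<dots> = (\<Sum>j\<in>A g. if j \<in> Uset A S then - p j else w j)"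
    using sum.inter_restrict[OF assms(1), of _ "A g", symmetric] assms(2,5)
    by (simp add: Int_absorb1)
  finally show ?thesis by simp
qed

lemma sum_weights_eq_sum_cov:
  assumes "finite J" "\<forall>g\<in>S. A g \<subseteq> J" "finite S"
  shows "(\<Sum>g\<in>S. sum w (A g)) = (\<Sum>j\<in>J. real (cov A S j) * w j)"
proof -
  have "(\<Sum>g\<in>S. sum w (A g)) = (\<Sum>g\<in>S. \<Sum>j\<in>J. if j \<in> A g then w j else 0)"
  proof (rule sum.cong[OF refl])
    fix g assume "g \<in> S"
    then show "sum w (A g) = (\<Sum>j\<in>J. if j \<in> A g then w j else 0)"
      using assms(2) sum.inter_restrict[OF assms(1), of w "A g"] by (simp add: Int_absorb1)
  qed
  also have "\<dots> = (\<Sum>j\<in>J. \<Sum>g\<in>S. if j \<in> A g then w j else 0)"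
    by (rule sum.swap)
  also have "\<dots> = (\<Sum>j\<in>J. real (cov A S j) * w j)"
    using sum.inter_filter[OF assms(3), of "\<lambda>_. w _"] by (simp add: cov_def)
  finally show ?thesis .
qed

lemma Wval_le_sum_singletons:
  assumes "finite J" "\<forall>g\<in>S. A g \<subseteq> J" "finite S" "\<forall>j\<in>J. p j \<ge> - w j"
  shows "Wval A w p S \<le> (\<Sum>g\<in>S. Wval A w p {g})"
proof -
  have "Wcontrib A w p S j \<le> real (cov A S j) * w j" if "j \<in> J" for j
  proof (cases "j \<in> Uset A S")
    case True
    then have "real (cov A S j) - 1 \<ge> 0"
      using cov_eq_0_iff[OF assms(3), of A j] by simp
    then have "(real (cov A S j) - 1) * - w j \<le> (real (cov A S j) - 1) * p j"
      using assms(4) that by (intro mult_left_mono) auto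
    then show ?thesis using True by (simp add: Wcontrib_def algebra_simps)
  qed (simp add: Wcontrib_def cov_eq_0_iff[OF assms(3), THEN iffD2])
  then have "(\<Sum>j\<in>J. Wcontrib A w p S j) \<le> (\<Sum>j\<in>J. real (cov A S j) * w j)"
    by (rule sum_mono)
  moreover have "Uset A S \<subseteq> J"
    using assms(2) by (auto simp: Uset_def)
  ultimately show ?thesis
    by (simp add: Wval_eq_sum_Wcontrib[OF assms(1)] sum_weights_eq_sum_cov[OF assms(1-3)]
        Wval_singleton)
qed

lemma greedy_reach_card:
  "greedy_reach G A w p k wt S l \<Longrightarrow> S \<subseteq> G \<and> finite S \<and> card S = l"
  by (induction rule: greedy_reach.induct) auto

lemma greedy_reach_weights:
  "greedy_reach G A w p k wt S l \<Longrightarrow> wt = (\<lambda>j. if j \<in> Uset A S then - p j else w j)"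
  by (induction rule: greedy_reach.induct) (auto simp: Uset_def)

lemma greedy_reach_Wval_lower:
  assumes "finite J" "\<forall>g\<in>G. A g \<subseteq> J" "greedy_reach G A w p k wt S l"
  shows "0 \<le> Wval A w p S \<and> (S \<noteq> {} \<longrightarrow> (\<forall>h\<in>G. Wval A w p {h} \<le> Wval A w p S))"
  using assms(3)
proof (induction rule: greedy_reach.induct)
  case init
  show ?case by simp
next
  case (step wt S l g)
  have S: "S \<subseteq> G" "finite S"
    using greedy_reach_card[OF step.hyps(1)] by auto
  have wt: "wt = (\<lambda>j. if j \<in> Uset A S then - p j else w j)"
    using greedy_reach_weights[OF step.hyps(1)] .
  have gain: "Wval A w p (insert g S) = Wval A w p S + (\<Sum>j\<in>A g. wt j)"
    using Wval_insert[OF assms(1,2) S] step.hyps(3) wt by simp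
  have "Wval A w p {h} \<le> Wval A w p (insert g S)" if "h \<in> G" for h
  proof (cases "S = {}")
    case True
    then have "Wval A w p {h} \<le> (\<Sum>j\<in>A g. wt j)"
      using step.hyps(5) that wt by (simp add: Wval_singleton Uset_def)
    then show ?thesis using gain True by simp
  next
    case False
    then show ?thesis using step.IH step.hyps(4) gain that by fastforce
  qed
  then show ?case using step.IH step.hyps(4) gain by auto
qed

lemma greedy_output_Wval_lower:
  assumes "finite J" "\<forall>g\<in>G. A g \<subseteq> J" "k > 0" "greedy_output G A w p k S"
  shows "0 \<le> Wval A w p S" and "\<forall>h\<in>G. Wval A w p {h} \<le> Wval A w p S"
proof -
  obtain wt l where reach: "greedy_reach G A w p k wt S l"
    and stop: "l = k \<or> \<not> (\<exists>g\<in>G - S. (\<Sum>j\<in>A g. wt j) > 0)"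
    using assms(4) unfolding greedy_output_def by blast
  note lower = greedy_reach_Wval_lower[OF assms(1,2) reach]
  then show "0 \<le> Wval A w p S" by simp
  show "\<forall>h\<in>G. Wval A w p {h} \<le> Wval A w p S"
  proof (cases "S = {}")
    case True
    then have "l = 0" "wt = w"
      using greedy_reach_card[OF reach] greedy_reach_weights[OF reach] by (auto simp: Uset_def)
    then show ?thesis using stop True assms(3) by (auto simp: Wval_singleton)
  qed (use lower in auto)
qed

theorem mainTheorem3:
  fixes J :: "'j set" and G :: "'g set" and A :: "'g \<Rightarrow> 'j set"
    and w p :: "'j \<Rightarrow> real" and k :: nat and Sopt Shat :: "'g set"
  assumes "finite J" and "finite G"
    and "\<forall>g\<in>G. A g \<subseteq> J"
    and "\<forall>j\<in>J. p j > 0"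
    and "k > 0"
    and "\<forall>j\<in>J. p j \<ge> - w j"
    and "optimal_kset G A w p k Sopt"
    and "greedy_output G A w p k Shat"
  shows "Wval A w p Shat \<ge> Wval A w p Sopt / real k"
proof -
  have Sopt: "Sopt \<subseteq> G" "card Sopt \<le> k"
    using assms(7) unfolding optimal_kset_def by auto
  note lower = greedy_output_Wval_lower[OF assms(1,3,5,8)]
  have "Wval A w p Sopt \<le> (\<Sum>h\<in>Sopt. Wval A w p {h})"
    using Sopt(1) assms(1,3,6) finite_subset[OF Sopt(1) assms(2)]
    by (intro Wval_le_sum_singletons) auto
  also have "\<dots> \<le> (\<Sum>h\<in>Sopt. Wval A w p Shat)"
    using Sopt(1) lower(2) by (intro sum_mono) auto
  also have "\<dots> \<le> real k * Wval A w p Shat"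
    using Sopt(2) lower(1) by (simp add: mult_right_mono)
  finally show ?thesis
    using assms(5) by (simp add: divide_le_eq mult.commute)
qed

end
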